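(* Let $A$ be a finite set, $\rho\subseteq A^n$ a key relation, and $\boldsymbol f=(f_1,\dots,f_n)$ a vector-function of arity $m$ (each $f_i:A^m\to A$) which preserves $\rho$. Then $\boldsymbol f$ preserves $\mathrm{Key}(\rho)$.
   Context: A unary vector-function is a tuple $\Psi=(\psi_1,\dots,\psi_n)$ of maps $\psi_i:A\to A$ acting coordinatewise; it preserves $\rho$ if $\Psi(\rho)\subseteq\rho$. $\rho$ is a key relation if there is $\beta\in A^n\setminus\rho$ (a key tuple) such that every $\alpha\in A^n\setminus\rho$ is mapped to $\beta$ by some unary vector-function preserving $\rho$. $\mathrm{Key}(\rho)$ is $\rho$ together with all key tuples for $\rho$. An $m$-ary vector-function $(f_1,\dots,f_n)$ preserves a relation $\tau\subseteq A^n$ if for all $\alpha^1,\dots,\alpha^m\in\tau$ the tuple $(f_1(\alpha^1(1),\dots,\alpha^m(1)),\dots,f_n(\alpha^1(n),\dots,\alpha^m(n)))$ lies in $\tau$. *)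

theory Defs
  imports Main
begin

text \<open>The finite base set A is the universe of a finite type 'a.
  n-tuples over A are lists of length n; a relation is a set of such lists.\<close>

definition tuples :: "nat \<Rightarrow> 'a list set" where
  "tuples n = {xs. length xs = n}"

definition apply_unary :: "nat \<Rightarrow> (nat \<Rightarrow> 'a \<Rightarrow> 'a) \<Rightarrow> 'a list \<Rightarrow> 'a list" where
  "apply_unary n \<Psi> \<alpha> = map (\<lambda>i. \<Psi> i (\<alpha> ! i)) [0..<n]"

definition preserves_unary :: "nat \<Rightarrow> (nat \<Rightarrow> 'a \<Rightarrow> 'a) \<Rightarrow> 'a list set \<Rightarrow> bool" where
  "preserves_unary n \<Psi> \<rho> \<longleftrightarrow> (\<forall>\<alpha>\<in>\<rho>. apply_unary n \<Psi> \<alpha> \<in> \<rho>)"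

definition key_tuple :: "nat \<Rightarrow> 'a list set \<Rightarrow> 'a list \<Rightarrow> bool" where
  "key_tuple n \<rho> \<beta> \<longleftrightarrow> \<beta> \<in> tuples n - \<rho> \<and>
     (\<forall>\<alpha>\<in>tuples n - \<rho>. \<exists>\<Psi>. preserves_unary n \<Psi> \<rho> \<and> apply_unary n \<Psi> \<alpha> = \<beta>)"

definition key_relation :: "nat \<Rightarrow> 'a list set \<Rightarrow> bool" where
  "key_relation n \<rho> \<longleftrightarrow> \<rho> \<subseteq> tuples n \<and> (\<exists>\<beta>. key_tuple n \<rho> \<beta>)"

definition Key :: "nat \<Rightarrow> 'a list set \<Rightarrow> 'a list set" where
  "Key n \<rho> = \<rho> \<union> {\<beta>. key_tuple n \<rho> \<beta>}"

definition apply_vf :: "nat \<Rightarrow> nat \<Rightarrow> (nat \<Rightarrow> 'a list \<Rightarrow> 'a) \<Rightarrow> (nat \<Rightarrow> 'a list) \<Rightarrow> 'a list" where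
  "apply_vf n m f \<alpha>s = map (\<lambda>i. f i (map (\<lambda>j. \<alpha>s j ! i) [0..<m])) [0..<n]"

definition preserves_vf :: "nat \<Rightarrow> nat \<Rightarrow> (nat \<Rightarrow> 'a list \<Rightarrow> 'a) \<Rightarrow> 'a list set \<Rightarrow> bool" where
  "preserves_vf n m f \<tau> \<longleftrightarrow> (\<forall>\<alpha>s. (\<forall>j<m. \<alpha>s j \<in> \<tau>) \<longrightarrow> apply_vf n m f \<alpha>s \<in> \<tau>)"

end

theory Submission
  imports Defs
begin

text \<open>Let \<open>\<gamma> = f(\<alpha>\<^sub>1,\<dots>,\<alpha>\<^sub>m)\<close> with all \<open>\<alpha>\<^sub>j \<in> Key(\<rho>)\<close> and \<open>\<gamma> \<notin> \<rho>\<close>. Every tuple \<open>\<alpha> \<notin> \<rho>\<close>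
  can be sent to each \<open>\<alpha>\<^sub>j\<close> by a unary vector-function \<open>\<Phi>\<^sub>j\<close> preserving \<open>\<rho>\<close> (a constant one
  when \<open>\<alpha>\<^sub>j \<in> \<rho>\<close>, the one given by the key property otherwise). Then \<open>f(\<Phi>\<^sub>1,\<dots>,\<Phi>\<^sub>m)\<close>
  is a unary vector-function preserving \<open>\<rho>\<close> that sends \<open>\<alpha>\<close> to \<open>\<gamma>\<close>, so \<open>\<gamma>\<close> is a key tuple.\<close>

definition compose_vf ::
    "nat \<Rightarrow> (nat \<Rightarrow> 'a list \<Rightarrow> 'a) \<Rightarrow> (nat \<Rightarrow> nat \<Rightarrow> 'a \<Rightarrow> 'a) \<Rightarrow> nat \<Rightarrow> 'a \<Rightarrow> 'a" where
  "compose_vf m f \<Phi> = (\<lambda>i a. f i (map (\<lambda>j. \<Phi> j i a) [0..<m]))"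

lemma apply_unary_compose_vf:
  "apply_unary n (compose_vf m f \<Phi>) x = apply_vf n m f (\<lambda>j. apply_unary n (\<Phi> j) x)"
  by (simp add: apply_unary_def apply_vf_def compose_vf_def)

lemma preserves_unary_compose_vf:
  assumes "preserves_vf n m f \<rho>" and "\<And>j. j < m \<Longrightarrow> preserves_unary n (\<Phi> j) \<rho>"
  shows "preserves_unary n (compose_vf m f \<Phi>) \<rho>"
  using assms by (simp add: preserves_unary_def preserves_vf_def apply_unary_compose_vf)

lemma apply_unary_const:
  assumes "\<beta> \<in> tuples n"
  shows "apply_unary n (\<lambda>i _. \<beta> ! i) x = \<beta>"
  using assms by (simp add: apply_unary_def tuples_def list_eq_iff_nth_eq)

lemma preserves_unary_const:
  assumes "\<rho> \<subseteq> tuples n" and "\<beta> \<in> \<rho>"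
  shows "preserves_unary n (\<lambda>i _. \<beta> ! i) \<rho>"
  using assms by (auto simp: preserves_unary_def apply_unary_const)

lemma Key_reachable:
  assumes "\<rho> \<subseteq> tuples n" and "\<alpha> \<in> tuples n - \<rho>" and "\<beta> \<in> Key n \<rho>"
  shows "\<exists>\<Psi>. preserves_unary n \<Psi> \<rho> \<and> apply_unary n \<Psi> \<alpha> = \<beta>"
proof (cases "\<beta> \<in> \<rho>")
  case True
  with assms(1) show ?thesis
    by (blast intro: preserves_unary_const apply_unary_const)
next
  case False
  with assms(3) have "key_tuple n \<rho> \<beta>" by (simp add: Key_def)
  with assms(2) show ?thesis by (simp add: key_tuple_def)
qed

lemma key_tuple_apply_vf:
  assumes sub: "\<rho> \<subseteq> tuples n" and f: "preserves_vf n m f \<rho>"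
    and \<alpha>s: "\<And>j. j < m \<Longrightarrow> \<alpha>s j \<in> Key n \<rho>"
    and out: "apply_vf n m f \<alpha>s \<notin> \<rho>"
  shows "key_tuple n \<rho> (apply_vf n m f \<alpha>s)"
  unfolding key_tuple_def
proof (intro conjI ballI)
  show "apply_vf n m f \<alpha>s \<in> tuples n - \<rho>"
    using out by (simp add: tuples_def apply_vf_def)
next
  fix \<alpha> assume \<alpha>: "\<alpha> \<in> tuples n - \<rho>"
  obtain \<Phi> where \<Phi>: "\<And>j. j < m \<Longrightarrow> preserves_unary n (\<Phi> j) \<rho> \<and> apply_unary n (\<Phi> j) \<alpha> = \<alpha>s j"
    using Key_reachable[OF sub \<alpha> \<alpha>s] by metis
  have args: "map (\<lambda>j. apply_unary n (\<Phi> j) \<alpha> ! i) [0..<m] = map (\<lambda>j. \<alpha>s j ! i) [0..<m]" for i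
    using \<Phi> by simp
  have "apply_unary n (compose_vf m f \<Phi>) \<alpha> = apply_vf n m f \<alpha>s"
    by (simp only: apply_unary_compose_vf apply_vf_def args)
  moreover have "preserves_unary n (compose_vf m f \<Phi>) \<rho>"
    using f \<Phi> by (blast intro: preserves_unary_compose_vf)
  ultimately show "\<exists>\<Psi>. preserves_unary n \<Psi> \<rho> \<and> apply_unary n \<Psi> \<alpha> = apply_vf n m f \<alpha>s"
    by blast
qed

theorem mainTheorem19:
  fixes \<rho> :: "('a::finite) list set" and f :: "nat \<Rightarrow> 'a list \<Rightarrow> 'a" and n m :: nat
  assumes "key_relation n \<rho>"
    and "preserves_vf n m f \<rho>"
  shows "preserves_vf n m f (Key n \<rho>)"
  unfolding preserves_vf_def
proof (intro allI impI)
  fix \<alpha>s assume "\<forall>j<m. \<alpha>s j \<in> Key n \<rho>"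
  moreover have "\<rho> \<subseteq> tuples n"
    using assms(1) by (simp add: key_relation_def)
  ultimately show "apply_vf n m f \<alpha>s \<in> Key n \<rho>"
    using key_tuple_apply_vf[OF _ assms(2)] by (auto simp: Key_def)
qed

end
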